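(* Let $q\in L_2(0,\pi)$ be real valued, $h,H\in\mathbb R$, $\omega=\frac12\int_0^\pi q(t)\,dt$, and suppose $0$ is an eigenvalue of the problem $-y''+q(x)y=\rho^2y$ on $(0,\pi)$, $y'(0)-hy(0)=0$, $y'(\pi)+Hy(\pi)=0$. Let $\varphi(\rho,x)$ be the solution with $\varphi(\rho,0)=1$, $\varphi'(\rho,0)=h$, with NSBF coefficients $g_n(x)$, $\gamma_n(x)$ (see context), and put $h_n:=\gamma_n(\pi)+Hg_n(\pi)$, $n\ge0$. Then $$h+H+\omega=-h_0,$$ and the characteristic function $\Phi(\rho):=\varphi'(\rho,\pi)+H\varphi(\rho,\pi)$ satisfies, for all $\rho\in\mathbb C$, $$\Phi(\rho)=-\rho\sin(\rho\pi)+h_0\left(\mathbf j_0(\rho\pi)-\cos(\rho\pi)\right)+\sum_{n=1}^\infty(-1)^nh_n\mathbf j_{2n}(\rho\pi).$$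
   Context: $\mathbf j_k$ denotes the spherical Bessel function of the first kind of order $k$; $\mathbf j_0(z)=\sin z/z$. It is known (Kravchenko–Navarro–Torba) that $\varphi(\rho,x)=\cos(\rho x)+\sum_{n=0}^\infty(-1)^ng_n(x)\mathbf j_{2n}(\rho x)$ and $\varphi'(\rho,x)=-\rho\sin(\rho x)+\left(h+\frac12\int_0^xq(t)dt\right)\cos(\rho x)+\sum_{n=0}^\infty(-1)^n\gamma_n(x)\mathbf j_{2n}(\rho x)$, with $\rho$-independent coefficients, both series converging for every $\rho\in\mathbb C$, where $g_0(x)=\varphi(0,x)-1$ and $\gamma_0(x)=g_0'(x)-h-\frac12\int_0^xq(t)dt$. *)

theory Defs
  imports "HOL-Analysis.Analysis"
begin

text \<open>Spherical Bessel function of the first kind of order k, via its power series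
  j_k(z) = 2^k z^k sum_m (-1)^m (k+m)! z^(2m) / (m! (2k+2m+1)!);  j_0(z) = sin z / z.\<close>
definition sph_bessel_j :: "nat \<Rightarrow> complex \<Rightarrow> complex" where
  "sph_bessel_j k z = (2::complex) ^ k * z ^ k *
     (\<Sum>m. (-1) ^ m * of_nat (fact (k + m)) * z ^ (2 * m)
            / (of_nat (fact m) * of_nat (fact (2 * k + 2 * m + 1))))"

text \<open>y solves -y'' + q y = lam y on [0,pi] in the Caratheodory sense: y is differentiable
  on [0,pi] with derivative y', and y' is the indefinite integral of (q - lam) y
  (so y' is absolutely continuous and y'' = (q - lam) y a.e.).\<close>
definition sl_solution :: "(real \<Rightarrow> real) \<Rightarrow> complex \<Rightarrow> (real \<Rightarrow> complex) \<Rightarrow> (real \<Rightarrow> complex) \<Rightarrow> bool" where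
  "sl_solution q lam y y' \<longleftrightarrow>
     (\<forall>x\<in>{0..pi}. (y has_vector_derivative y' x) (at x within {0..pi})) \<and>
     (\<forall>x\<in>{0..pi}. ((\<lambda>t. (complex_of_real (q t) - lam) * y t) has_integral (y' x - y' 0)) {0..x})"

definition sl_eigenvalue :: "(real \<Rightarrow> real) \<Rightarrow> real \<Rightarrow> real \<Rightarrow> complex \<Rightarrow> bool" where
  "sl_eigenvalue q h H lam \<longleftrightarrow>
     (\<exists>y y'. sl_solution q lam y y' \<and> (\<exists>x\<in>{0..pi}. y x \<noteq> 0) \<and>
             y' 0 - complex_of_real h * y 0 = 0 \<and> y' pi + complex_of_real H * y pi = 0)"

end

theory Submission imports Defs begin

text \<open>Since 0 is an eigenvalue and the eigenfunction with the left boundary condition is a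
  multiple of \<open>\<phi>(0,\<cdot>)\<close> (uniqueness for the initial value problem), the characteristic function
  vanishes at 0. Evaluating the NSBF series at \<open>\<rho> = 0\<close>, where only \<open>j\<^sub>0(0) = 1\<close> survives, turns
  \<open>\<Phi>(0) = 0\<close> into \<open>h + H + \<omega> = -h\<^sub>0\<close>. Adding the NSBF series of \<open>\<phi>'\<close> and \<open>H\<phi>\<close> at \<open>x = \<pi>\<close> and
  splitting off the term \<open>n = 0\<close>, this identity replaces \<open>(h + H + \<omega>) cos(\<rho>\<pi>)\<close> by \<open>-h\<^sub>0 cos(\<rho>\<pi>)\<close>.\<close>

lemma sph_bessel_j_at_0: "sph_bessel_j k 0 = (if k = 0 then 1 else 0)"
proof (cases "k = 0")
  case True
  have "(\<lambda>m. (-1) ^ m * of_nat (fact m) * (0::complex) ^ (2 * m)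
            / (of_nat (fact m) * of_nat (fact (2 * m + 1)))) = (\<lambda>m. if m = 0 then 1 else 0)"
    by (auto simp: fun_eq_iff)
  moreover have "(\<lambda>m. if m = 0 then (1::complex) else 0) sums 1"
    using sums_single[of 0 "\<lambda>_. 1::complex"] by simp
  ultimately show ?thesis using True by (simp add: sph_bessel_j_def sums_iff)
qed (simp add: sph_bessel_j_def)

lemma sl_solution_diff_scaled:
  assumes "sl_solution q lam y y'" "sl_solution q lam u u'"
  shows "sl_solution q lam (\<lambda>x. y x - c * u x) (\<lambda>x. y' x - c * u' x)"
  unfolding sl_solution_def
proof (intro conjI ballI)
  fix x :: real assume x: "x \<in> {0..pi}"
  show "((\<lambda>x. y x - c * u x) has_vector_derivative (y' x - c * u' x)) (at x within {0..pi})"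
    using assms x unfolding sl_solution_def
    by (intro has_vector_derivative_diff has_vector_derivative_mult_right) auto
  have "((\<lambda>t. (complex_of_real (q t) - lam) * y t - c * ((complex_of_real (q t) - lam) * u t))
      has_integral ((y' x - y' 0) - c * (u' x - u' 0))) {0..x}"
    using assms x unfolding sl_solution_def by (intro has_integral_diff has_integral_mult_right) auto
  then show "((\<lambda>t. (complex_of_real (q t) - lam) * (y t - c * u t)) has_integral
      (y' x - c * u' x - (y' 0 - c * u' 0))) {0..x}"
    by (simp add: algebra_simps)
qed

text \<open>On an interval where \<open>\<integral>|q - \<lambda>| \<le> 1/2\<close> and whose length is at most 1, the maximum \<open>M\<close>
  of \<open>|z|\<close> bounds \<open>|z'|\<close> by \<open>M/2\<close>, hence \<open>|z|\<close> by \<open>M/2\<close> again, forcing \<open>M = 0\<close>.\<close>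

lemma sl_solution_vanishes_on_short_interval:
  fixes z z' :: "real \<Rightarrow> complex"
  assumes sol: "sl_solution q lam z z'"
    and p_int: "(\<lambda>t. cmod (complex_of_real (q t) - lam)) integrable_on {0..pi}"
    and ab: "0 \<le> a" "a \<le> b" "b \<le> pi"
    and small: "integral {a..b} (\<lambda>t. cmod (complex_of_real (q t) - lam)) \<le> 1/2" "b - a \<le> 1"
    and za: "z a = 0" "z' a = 0"
  shows "\<forall>x\<in>{a..b}. z x = 0 \<and> z' x = 0"
proof -
  define p where "p = (\<lambda>t. cmod (complex_of_real (q t) - lam))"
  have der: "\<And>x. x \<in> {0..pi} \<Longrightarrow> (z has_vector_derivative z' x) (at x within {0..pi})"
    and int: "\<And>x. x \<in> {0..pi} \<Longrightarrow> ((\<lambda>t. (complex_of_real (q t) - lam) * z t) has_integral (z' x - z' 0)) {0..x}"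
    using sol unfolding sl_solution_def by auto
  have "continuous_on {0..pi} z"
    using der by (meson continuous_on_eq_continuous_within differentiableI_vector differentiable_imp_continuous_within)
  then have z_cont: "continuous_on {a..b} (\<lambda>x. norm (z x))"
    using ab by (intro continuous_intros) (auto elim: continuous_on_subset)
  obtain m where m: "m \<in> {a..b}" "\<And>x. x \<in> {a..b} \<Longrightarrow> norm (z x) \<le> norm (z m)"
    using continuous_attains_sup[OF compact_Icc _ z_cont] ab by auto
  define M where "M = norm (z m)"
  have M0: "M \<ge> 0" by (simp add: M_def)
  have p_ab: "p integrable_on {a..b}"
    by (rule integrable_subinterval_real[OF p_int[folded p_def]]) (use ab in auto)
  have z'_bound: "norm (z' x) \<le> M / 2" if x: "x \<in> {a..b}" for x
  proof -
    let ?F = "\<lambda>t. (complex_of_real (q t) - lam) * z t"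
    have Fx: "(?F has_integral (z' x - z' 0)) {0..x}" and Fa: "(?F has_integral (z' a - z' 0)) {0..a}"
      using int x ab by auto
    have "integral {0..a} ?F + integral {a..x} ?F = integral {0..x} ?F"
      by (rule Henstock_Kurzweil_Integration.integral_combine[OF _ _ has_integral_integrable[OF Fx]])
        (use x ab in auto)
    then have z'_eq: "z' x = integral {a..x} ?F"
      using Fx Fa za by (simp add: integral_unique)
    have F_ax: "?F integrable_on {a..x}"
      by (rule integrable_subinterval_real[OF has_integral_integrable[OF Fx]]) (use x ab in auto)
    have p_ax: "p integrable_on {a..x}"
      using x by (intro integrable_subinterval_real[OF p_ab]) auto
    have "norm (integral {a..x} ?F) \<le> integral {a..x} (\<lambda>t. p t * M)"
    proof (rule integral_norm_bound_integral[OF F_ax])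
      show "(\<lambda>t. p t * M) integrable_on {a..x}" using p_ax by (rule integrable_on_mult_left)
      fix t assume "t \<in> {a..x}"
      then show "norm (?F t) \<le> p t * M"
        using m(2)[of t] x unfolding M_def p_def norm_mult by (intro mult_left_mono) auto
    qed
    also have "\<dots> = integral {a..x} p * M" by simp
    also have "\<dots> \<le> integral {a..b} p * M"
      using x by (intro mult_right_mono[OF integral_subset_le[OF _ p_ax p_ab]]) (auto simp: M0 p_def)
    also have "\<dots> \<le> M / 2" using mult_right_mono[OF small(1) M0] unfolding p_def by simp
    finally show ?thesis using z'_eq by simp
  qed
  have z_bound: "norm (z x) \<le> M / 2" if x: "x \<in> {a..b}" for x
  proof -
    have "norm (z x - z a) \<le> M / 2 * norm (x - a)"
    proof (rule differentiable_bound[of "{a..b}" z "\<lambda>y h. h *\<^sub>R z' y"])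
      fix y assume y: "y \<in> {a..b}"
      have "(z has_vector_derivative z' y) (at y within {a..b})"
        by (rule has_vector_derivative_within_subset[OF der[of y]]) (use y ab in auto)
      then show "(z has_derivative (\<lambda>h. h *\<^sub>R z' y)) (at y within {a..b})"
        by (simp add: has_vector_derivative_def)
      have "onorm (\<lambda>h::real. h *\<^sub>R z' y) = norm (z' y)"
        using onorm_scaleR_left[OF bounded_linear_ident, of "z' y"] by (simp add: onorm_id)
      then show "onorm (\<lambda>h::real. h *\<^sub>R z' y) \<le> M / 2" using z'_bound[OF y] by simp
    qed (use x ab in auto)
    also have "\<dots> \<le> M / 2" using x small M0 by (simp add: mult_left_le)
    finally show ?thesis using za by simp
  qed
  have "M = 0" using z_bound[OF m(1)] M0 by (simp add: M_def)
  then show ?thesis using m(2) z'_bound unfolding M_def by (metis norm_le_zero_iff div_0)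
qed

lemma sl_solution_zero_initial_imp_zero:
  fixes z z' :: "real \<Rightarrow> complex"
  assumes sol: "sl_solution q lam z z'"
    and p_int: "(\<lambda>t. cmod (complex_of_real (q t) - lam)) integrable_on {0..pi}"
    and z0: "z 0 = 0" "z' 0 = 0"
  shows "\<forall>x\<in>{0..pi}. z x = 0 \<and> z' x = 0"
proof -
  define p where "p = (\<lambda>t. cmod (complex_of_real (q t) - lam))"
  define G where "G x = integral {0..x} p" for x
  have "continuous_on {0..pi} G"
    unfolding G_def p_def by (rule indefinite_integral_continuous_1[OF p_int])
  then have "uniformly_continuous_on {0..pi} G"
    by (rule compact_uniformly_continuous) simp
  then obtain d where d: "d > 0"
    "\<And>x x'. x \<in> {0..pi} \<Longrightarrow> x' \<in> {0..pi} \<Longrightarrow> dist x' x < d \<Longrightarrow> dist (G x') (G x) < 1/2"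
    unfolding uniformly_continuous_on_def by (meson half_gt_zero zero_less_one)
  define e where "e = min (d/2) 1"
  have e: "e > 0" "e < d" "e \<le> 1" using d(1) by (auto simp: e_def)
  have vanish: "\<forall>x\<in>{0..min pi (real k * e)}. z x = 0 \<and> z' x = 0" for k
  proof (induction k)
    case 0
    then show ?case using z0 e by auto
  next
    case (Suc k)
    define a where "a = min pi (real k * e)"
    define b where "b = min pi (real (Suc k) * e)"
    have ab: "0 \<le> a" "a \<le> b" "b \<le> pi" "b - a \<le> e"
      using e unfolding a_def b_def by (auto simp: min_def distrib_right)
    have "integral {0..a} p + integral {a..b} p = integral {0..b} p"
      by (rule Henstock_Kurzweil_Integration.integral_combine[OF _ _ integrable_subinterval_real[OF p_int[folded p_def]]])
        (use ab in auto)
    moreover have "dist (G b) (G a) < 1/2" using ab e by (intro d(2)) (auto simp: dist_real_def)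
    ultimately have "integral {a..b} p \<le> 1/2"
      unfolding G_def dist_real_def by linarith
    moreover have "z a = 0" "z' a = 0" using Suc.IH ab unfolding a_def by auto
    ultimately have "\<forall>x\<in>{a..b}. z x = 0 \<and> z' x = 0"
      using ab e unfolding p_def by (intro sl_solution_vanishes_on_short_interval[OF sol p_int]) auto
    then show ?case
      using Suc.IH unfolding a_def b_def by (metis atLeastAtMost_iff linear)
  qed
  obtain k :: nat where "pi / e \<le> real k" using real_arch_simple by blast
  then have "min pi (real k * e) = pi" using e(1) by (simp add: pos_divide_le_eq)
  then show ?thesis using vanish[of k] by simp
qed

lemma sl_char_fun_vanishes_at_eigenvalue:
  assumes eig: "sl_eigenvalue q h H lam"
    and sol: "sl_solution q lam \<phi> \<phi>'"
    and \<phi>_0: "\<phi> 0 = 1" and \<phi>'_0: "\<phi>' 0 = complex_of_real h"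
    and p_int: "(\<lambda>t. cmod (complex_of_real (q t) - lam)) integrable_on {0..pi}"
  shows "\<phi>' pi + complex_of_real H * \<phi> pi = 0"
proof -
  obtain y y' where y_sol: "sl_solution q lam y y'" and y_nz: "\<exists>x\<in>{0..pi}. y x \<noteq> 0"
    and y_left: "y' 0 - complex_of_real h * y 0 = 0" and y_right: "y' pi + complex_of_real H * y pi = 0"
    using eig unfolding sl_eigenvalue_def by blast
  have "y' 0 = y 0 * \<phi>' 0"
    using y_left \<phi>'_0 by (simp add: mult.commute)
  then have y_eq: "\<forall>x\<in>{0..pi}. y x - y 0 * \<phi> x = 0 \<and> y' x - y 0 * \<phi>' x = 0"
    using \<phi>_0 by (intro sl_solution_zero_initial_imp_zero[OF sl_solution_diff_scaled[OF y_sol sol] p_int]) simp_all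
  have y_pi: "y pi = y 0 * \<phi> pi" "y' pi = y 0 * \<phi>' pi"
    using bspec[OF y_eq, of pi] by simp_all
  have "y 0 \<noteq> 0"
  proof
    assume "y 0 = 0"
    with y_eq y_nz show False by auto
  qed
  moreover have "y 0 * (\<phi>' pi + complex_of_real H * \<phi> pi) = 0"
    using y_pi y_right by (simp add: algebra_simps)
  ultimately show ?thesis by simp
qed

lemma square_integrable_imp_abs_integrable_on:
  fixes q :: "real \<Rightarrow> real"
  assumes "q \<in> borel_measurable (lebesgue_on {a..b})"
    and "integrable (lebesgue_on {a..b}) (\<lambda>t. (q t)\<^sup>2)"
  shows "(\<lambda>t. \<bar>q t\<bar>) integrable_on {a..b}"
proof -
  have "finite_measure (lebesgue_on {a..b})" by (rule finite_measure_lebesgue_on) simp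
  then have "integrable (lebesgue_on {a..b}) q"
    using assms by (rule finite_measure.square_integrable_imp_integrable)
  then show ?thesis by (intro integrable_on_lebesgue_on integrable_abs) simp_all
qed

lemma nsbf_series_at_0:
  assumes "(\<lambda>n. (-1) ^ n * complex_of_real (f n) * sph_bessel_j (2 * n) (0 * x)) sums s"
  shows "s = complex_of_real (f 0)"
proof -
  have "(\<lambda>n. (-1) ^ n * complex_of_real (f n) * sph_bessel_j (2 * n) (0 * x))
      = (\<lambda>n. if n = 0 then complex_of_real (f 0) else 0)"
    by (auto simp: fun_eq_iff sph_bessel_j_at_0)
  then show ?thesis
    using assms sums_single[of 0 "\<lambda>_. complex_of_real (f 0)"] by (simp add: sums_unique2)
qed

lemma nsbf_char_fun_series:
  fixes c H :: real and J :: "nat \<Rightarrow> complex"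
  assumes \<phi>_series: "(\<lambda>n. (-1) ^ n * complex_of_real (g n) * J n) sums (\<phi> - cos z)"
    and \<phi>'_series: "(\<lambda>n. (-1) ^ n * complex_of_real (\<gamma> n) * J n) sums (\<phi>' - (- \<rho> * sin z + complex_of_real c * cos z))"
    and c_eq: "c + H = - (\<gamma> 0 + H * g 0)"
  shows "(\<lambda>n. (-1) ^ (n + 1) * complex_of_real (\<gamma> (n + 1) + H * g (n + 1)) * J (n + 1))
    sums (\<phi>' + complex_of_real H * \<phi> - (- \<rho> * sin z + complex_of_real (\<gamma> 0 + H * g 0) * (J 0 - cos z)))"
proof -
  define f where "f n = (-1) ^ n * complex_of_real (\<gamma> n + H * g n) * J n" for n
  have "f = (\<lambda>n. (-1) ^ n * complex_of_real (\<gamma> n) * J n + complex_of_real H * ((-1) ^ n * complex_of_real (g n) * J n))"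
    by (simp add: fun_eq_iff f_def algebra_simps)
  then have "f sums ((\<phi>' - (- \<rho> * sin z + complex_of_real c * cos z)) + complex_of_real H * (\<phi> - cos z))"
    using sums_add[OF \<phi>'_series sums_mult[OF \<phi>_series]] by simp
  then have "(\<lambda>n. f (Suc n)) sums ((\<phi>' - (- \<rho> * sin z + complex_of_real c * cos z))
      + complex_of_real H * (\<phi> - cos z) - f 0)"
    by (simp add: sums_Suc_iff)
  moreover have "c = - H - (\<gamma> 0 + H * g 0)"
    using c_eq by linarith
  ultimately show ?thesis by (simp add: f_def algebra_simps)
qed

theorem mainTheorem4:
  fixes q :: "real \<Rightarrow> real" and h H :: real
    and \<phi> \<phi>' :: "complex \<Rightarrow> real \<Rightarrow> complex"
    and g \<gamma> :: "nat \<Rightarrow> real \<Rightarrow> real"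
  assumes q_meas: "q \<in> borel_measurable (lebesgue_on {0..pi})"
    and q_L2: "integrable (lebesgue_on {0..pi}) (\<lambda>t. (q t)\<^sup>2)"
    and eig0: "sl_eigenvalue q h H 0"
    and phi_sol: "\<And>\<rho>. sl_solution q (\<rho>\<^sup>2) (\<phi> \<rho>) (\<phi>' \<rho>)"
    and phi_0: "\<And>\<rho>. \<phi> \<rho> 0 = 1"
    and phi'_0: "\<And>\<rho>. \<phi>' \<rho> 0 = complex_of_real h"
    and nsbf_phi: "\<And>\<rho> x. x \<in> {0..pi} \<Longrightarrow>
       (\<lambda>n. (-1) ^ n * complex_of_real (g n x) * sph_bessel_j (2 * n) (\<rho> * complex_of_real x))
         sums (\<phi> \<rho> x - cos (\<rho> * complex_of_real x))"
    and nsbf_phi': "\<And>\<rho> x. x \<in> {0..pi} \<Longrightarrow>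
       (\<lambda>n. (-1) ^ n * complex_of_real (\<gamma> n x) * sph_bessel_j (2 * n) (\<rho> * complex_of_real x))
         sums (\<phi>' \<rho> x - (- \<rho> * sin (\<rho> * complex_of_real x)
                 + complex_of_real (h + integral {0..x} q / 2) * cos (\<rho> * complex_of_real x)))"
    and g0: "\<And>x. x \<in> {0..pi} \<Longrightarrow> g 0 x = Re (\<phi> 0 x) - 1"
    and gamma0: "\<And>x. x \<in> {0..pi} \<Longrightarrow>
       (g 0 has_real_derivative (\<gamma> 0 x + h + integral {0..x} q / 2)) (at x within {0..pi})"
  shows "h + H + integral {0..pi} q / 2 = - (\<gamma> 0 pi + H * g 0 pi)
    \<and> (\<forall>\<rho>::complex.
        (\<lambda>n. (-1) ^ (n + 1) * complex_of_real (\<gamma> (n + 1) pi + H * g (n + 1) pi)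
               * sph_bessel_j (2 * (n + 1)) (\<rho> * complex_of_real pi))
        sums (\<phi>' \<rho> pi + complex_of_real H * \<phi> \<rho> pi
              - (- \<rho> * sin (\<rho> * complex_of_real pi)
                 + complex_of_real (\<gamma> 0 pi + H * g 0 pi)
                   * (sph_bessel_j 0 (\<rho> * complex_of_real pi) - cos (\<rho> * complex_of_real pi)))))"
proof -
  have pi_in: "pi \<in> {0..pi}" by simp
  have "(\<lambda>t. \<bar>q t\<bar>) integrable_on {0..pi}"
    by (rule square_integrable_imp_abs_integrable_on[OF q_meas q_L2])
  then have "\<phi>' 0 pi + complex_of_real H * \<phi> 0 pi = 0"
    using phi_sol[of 0] phi_0 phi'_0
    by (intro sl_char_fun_vanishes_at_eigenvalue[OF eig0]) auto
  moreover have "\<phi> 0 pi - 1 = complex_of_real (g 0 pi)"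
    using nsbf_series_at_0[OF nsbf_phi[OF pi_in]] by simp
  moreover have "\<phi>' 0 pi - complex_of_real (h + integral {0..pi} q / 2) = complex_of_real (\<gamma> 0 pi)"
    using nsbf_series_at_0[OF nsbf_phi'[OF pi_in]] by simp
  ultimately have "complex_of_real (h + H + integral {0..pi} q / 2 + (\<gamma> 0 pi + H * g 0 pi)) = 0"
    by (simp add: algebra_simps)
  then have h0_eq: "h + H + integral {0..pi} q / 2 = - (\<gamma> 0 pi + H * g 0 pi)"
    by (simp only: of_real_eq_0_iff)
  then show ?thesis
    using nsbf_char_fun_series[OF nsbf_phi[OF pi_in] nsbf_phi'[OF pi_in]] by simp
qed

end
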